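(* For any path $\omega\in\Omega$ that is CH-random for a computable precise forecasting system $\varphi$: $\big[\liminf_{n\to\infty}\varphi(\omega_{1:n}),\ \limsup_{n\to\infty}\varphi(\omega_{1:n})\big]\subseteq I_\textnormal{CH}(\omega).$
   Context: $\mathcal{X}=\{0,1\}$; $\Omega=\mathcal{X}^{\mathbb{N}}$ (paths); $\mathbb{S}=\bigcup_{n\ge0}\mathcal X^n$ (situations), $\omega_{1:n}=(\omega_1,\dots,\omega_n)$, $\omega_{1:0}$ the empty string. $\mathcal{I}$: nonempty closed intervals $I\subseteq[0,1]$. A forecasting system is $\varphi:\mathbb S\to\mathcal I$, $\underline\varphi=\min\varphi$, $\overline\varphi=\max\varphi$; precise if $\underline\varphi=\overline\varphi$ (then $\varphi(s)$ is identified with the number $\underline\varphi(s)$); an interval forecast $I$ is identified with the constant forecasting system $s\mapsto I$. $\varphi$ is computable if there are recursive $\underline q,\overline q:\mathbb S\times\mathbb N_0\to\mathbb Q$ with $|\underline\varphi(s)-\underline q(s,n)|<2^{-n}$ and $|\overline\varphi(s)-\overline q(s,n)|<2^{-n}$. A path $\omega$ is CH-random for $\varphi$ if for every recursive selection process $S:\mathbb S\to\{0,1\}$ with $\sum_{k=0}^{n-1}S(\omega_{1:k})\to\infty$: $\liminf_n \frac{\sum_{k<n}S(\omega_{1:k})[\omega_{k+1}-\underline\varphi(\omega_{1:k})]}{\sum_{k<n}S(\omega_{1:k})}\ge0$ and $\limsup_n \frac{\sum_{k<n}S(\omega_{1:k})[\omega_{k+1}-\overline\varphi(\omega_{1:k})]}{\sum_{k<n}S(\omega_{1:k})}\le0$.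 $\mathcal I_\textnormal{CH}(\omega)=\{I\in\mathcal I:\omega\text{ CH-random for }I\}$, $I_\textnormal{CH}(\omega)=\bigcap_{I\in\mathcal I_\textnormal{CH}(\omega)}I$. *)

theory Defs
  imports Complex_Main "HOL-Library.Nat_Bijection" "HOL-Library.Extended_Real"
begin

datatype recf = Zero | Succ | Proj nat | Comp recf "recf list" | Prim recf recf | Mn recf

inductive eval_recf :: "recf \<Rightarrow> nat list \<Rightarrow> nat \<Rightarrow> bool" where
  zero: "eval_recf Zero xs 0"
| succ: "eval_recf Succ (x # xs) (Suc x)"
| proj: "i < length xs \<Longrightarrow> eval_recf (Proj i) xs (xs ! i)"
| comp: "list_all2 (\<lambda>g y. eval_recf g xs y) gs ys \<Longrightarrow> eval_recf f ys z
         \<Longrightarrow> eval_recf (Comp f gs) xs z"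
| prim0: "eval_recf f xs y \<Longrightarrow> eval_recf (Prim f g) (0 # xs) y"
| primS: "eval_recf (Prim f g) (n # xs) y \<Longrightarrow> eval_recf g (y # n # xs) z
          \<Longrightarrow> eval_recf (Prim f g) (Suc n # xs) z"
| mn: "eval_recf f (n # xs) 0 \<Longrightarrow> (\<forall>m<n. \<exists>y. y > 0 \<and> eval_recf f (m # xs) y)
       \<Longrightarrow> eval_recf (Mn f) xs n"

definition recursive_fun :: "(nat \<Rightarrow> nat) \<Rightarrow> bool" where
  "recursive_fun f \<longleftrightarrow> (\<exists>t. \<forall>n. eval_recf t [n] (f n))"

text \<open>Situations (finite binary strings) are bool lists (True = 1).\<close>
definition sit_encode :: "bool list \<Rightarrow> nat" where
  "sit_encode s = list_encode (map of_bool s)"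

definition rat_decode :: "nat \<Rightarrow> rat" where
  "rat_decode m = (case prod_decode m of (a, b) \<Rightarrow> of_int (int_decode a) / of_nat (Suc b))"

definition recursive_selection :: "(bool list \<Rightarrow> bool) \<Rightarrow> bool" where
  "recursive_selection S \<longleftrightarrow>
     (\<exists>g. recursive_fun g \<and> (\<forall>s. g (sit_encode s) = of_bool (S s)))"

definition recursive_rat_fun :: "(bool list \<Rightarrow> nat \<Rightarrow> rat) \<Rightarrow> bool" where
  "recursive_rat_fun q \<longleftrightarrow>
     (\<exists>g. recursive_fun g \<and> (\<forall>s n. q s n = rat_decode (g (prod_encode (sit_encode s, n)))))"

definition intervals :: "real set set" where
  "intervals = {I. \<exists>a b. 0 \<le> a \<and> a \<le> b \<and> b \<le> 1 \<and> I = {a..b}}"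

definition forecasting_system :: "(bool list \<Rightarrow> real set) \<Rightarrow> bool" where
  "forecasting_system \<phi> \<longleftrightarrow> (\<forall>s. \<phi> s \<in> intervals)"

definition lower :: "(bool list \<Rightarrow> real set) \<Rightarrow> bool list \<Rightarrow> real" where
  "lower \<phi> s = Inf (\<phi> s)"

definition upper :: "(bool list \<Rightarrow> real set) \<Rightarrow> bool list \<Rightarrow> real" where
  "upper \<phi> s = Sup (\<phi> s)"

definition precise :: "(bool list \<Rightarrow> real set) \<Rightarrow> bool" where
  "precise \<phi> \<longleftrightarrow> (\<forall>s. lower \<phi> s = upper \<phi> s)"

definition computable_fs :: "(bool list \<Rightarrow> real set) \<Rightarrow> bool" where
  "computable_fs \<phi> \<longleftrightarrow>
     (\<exists>ql qu. recursive_rat_fun ql \<and> recursive_rat_fun qu \<and>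
        (\<forall>s n. \<bar>lower \<phi> s - of_rat (ql s n)\<bar> < 1 / 2 ^ n \<and>
               \<bar>upper \<phi> s - of_rat (qu s n)\<bar> < 1 / 2 ^ n))"

text \<open>Paths are bool sequences; omega_{k+1} is \<open>\<omega> k\<close>; omega_{1:n} is \<open>prefix \<omega> n\<close>.\<close>
definition prefix :: "(nat \<Rightarrow> bool) \<Rightarrow> nat \<Rightarrow> bool list" where
  "prefix \<omega> n = map \<omega> [0..<n]"

definition CH_random :: "(bool list \<Rightarrow> real set) \<Rightarrow> (nat \<Rightarrow> bool) \<Rightarrow> bool" where
  "CH_random \<phi> \<omega> \<longleftrightarrow>
     (\<forall>S. recursive_selection S \<and>
          filterlim (\<lambda>n. \<Sum>k<n. of_bool (S (prefix \<omega> k)) :: real) at_top sequentially \<longrightarrow>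
        Liminf sequentially (\<lambda>n. ereal
          ((\<Sum>k<n. of_bool (S (prefix \<omega> k)) * (of_bool (\<omega> k) - lower \<phi> (prefix \<omega> k)))
           / (\<Sum>k<n. of_bool (S (prefix \<omega> k))))) \<ge> 0 \<and>
        Limsup sequentially (\<lambda>n. ereal
          ((\<Sum>k<n. of_bool (S (prefix \<omega> k)) * (of_bool (\<omega> k) - upper \<phi> (prefix \<omega> k)))
           / (\<Sum>k<n. of_bool (S (prefix \<omega> k))))) \<le> 0)"

definition I_CH :: "(nat \<Rightarrow> bool) \<Rightarrow> real set" where
  "I_CH \<omega> = \<Inter> {I \<in> intervals. CH_random (\<lambda>_. I) \<omega>}"

end

(* Let [a, b] be an interval for which the path is CH-random. If the forecasts fell below some
   c < a infinitely often, then thresholding a rational approximation of the computable forecast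
   at a rational r strictly between c and a would give a recursive selection rule that selects
   infinitely often, and only where the forecast is at most about r. Along it, randomness for the
   forecast makes the selected outcomes average at most about r in the limit, while randomness for
   [a, b] makes them average at least a: a contradiction. The bound for the limsup is symmetric. *)

theory Submission
  imports Defs
begin

section \<open>Total recursive functions\<close>

definition total_recursive :: "nat \<Rightarrow> (nat list \<Rightarrow> nat) \<Rightarrow> bool" where
  "total_recursive k f \<longleftrightarrow> (\<exists>t. \<forall>xs. length xs = k \<longrightarrow> eval_recf t xs (f xs))"

lemma total_recursive_cong:
  "total_recursive k f \<Longrightarrow> (\<And>xs. length xs = k \<Longrightarrow> f xs = g xs) \<Longrightarrow> total_recursive k g"
  unfolding total_recursive_def by metis

lemma total_recursive_proj: "i < k \<Longrightarrow> total_recursive k (\<lambda>xs. xs ! i)"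
  unfolding total_recursive_def by (auto intro: eval_recf.proj)

lemma total_recursive_comp1:
  assumes "total_recursive 1 f" "total_recursive k g"
  shows "total_recursive k (\<lambda>xs. f [g xs])"
proof -
  obtain tf tg where tf: "\<And>xs. length xs = 1 \<Longrightarrow> eval_recf tf xs (f xs)"
    and tg: "\<And>xs. length xs = k \<Longrightarrow> eval_recf tg xs (g xs)"
    using assms unfolding total_recursive_def by blast
  show ?thesis unfolding total_recursive_def
    by (intro exI[of _ "Comp tf [tg]"]) (auto intro!: eval_recf.comp tf tg)
qed

lemma total_recursive_comp2:
  assumes "total_recursive 2 f" "total_recursive k g" "total_recursive k h"
  shows "total_recursive k (\<lambda>xs. f [g xs, h xs])"
proof -
  obtain tf tg th where tf: "\<And>xs. length xs = 2 \<Longrightarrow> eval_recf tf xs (f xs)"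
    and tg: "\<And>xs. length xs = k \<Longrightarrow> eval_recf tg xs (g xs)"
    and th: "\<And>xs. length xs = k \<Longrightarrow> eval_recf th xs (h xs)"
    using assms unfolding total_recursive_def by blast
  show ?thesis unfolding total_recursive_def
    by (intro exI[of _ "Comp tf [tg, th]"]) (auto intro!: eval_recf.comp tf tg th)
qed

lemma total_recursive_Suc:
  assumes "total_recursive k g"
  shows "total_recursive k (\<lambda>xs. Suc (g xs))"
proof -
  have "total_recursive 1 (\<lambda>xs. Suc (hd xs))"
    unfolding total_recursive_def
    by (intro exI[of _ Succ]) (auto simp: length_Suc_conv intro: eval_recf.succ)
  from total_recursive_comp1[OF this assms] show ?thesis by simp
qed

lemma total_recursive_const: "total_recursive k (\<lambda>_. c)"
proof (induction c)
  case 0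
  show ?case unfolding total_recursive_def by (auto intro: eval_recf.zero)
next
  case (Suc c)
  then show ?case by (rule total_recursive_Suc)
qed

fun prim_rec :: "(nat list \<Rightarrow> nat) \<Rightarrow> (nat list \<Rightarrow> nat) \<Rightarrow> nat \<Rightarrow> nat list \<Rightarrow> nat" where
  "prim_rec f g 0 xs = f xs"
| "prim_rec f g (Suc n) xs = g (prim_rec f g n xs # n # xs)"

lemma total_recursive_prim_rec:
  assumes "total_recursive k f" "total_recursive (k + 2) g"
  shows "total_recursive (k + 1) (\<lambda>xs. prim_rec f g (hd xs) (tl xs))"
proof -
  obtain tf tg where tf: "\<And>xs. length xs = k \<Longrightarrow> eval_recf tf xs (f xs)"
    and tg: "\<And>xs. length xs = k + 2 \<Longrightarrow> eval_recf tg xs (g xs)"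
    using assms unfolding total_recursive_def by blast
  have Prim: "eval_recf (Prim tf tg) (n # xs) (prim_rec f g n xs)" if "length xs = k" for n xs
  proof (induction n)
    case 0
    show ?case using that by (auto intro: eval_recf.prim0 tf)
  next
    case (Suc n)
    moreover have "eval_recf tg (prim_rec f g n xs # n # xs) (g (prim_rec f g n xs # n # xs))"
      using that by (intro tg) simp
    ultimately show ?case by (auto intro: eval_recf.primS)
  qed
  show ?thesis unfolding total_recursive_def
    by (intro exI[of _ "Prim tf tg"]) (auto simp: length_Suc_conv intro: Prim)
qed

lemma total_recursive_prim_rec_unary:
  "total_recursive 0 f \<Longrightarrow> total_recursive 2 g \<Longrightarrow>
    total_recursive 1 (\<lambda>xs. prim_rec f g (hd xs) (tl xs))"
  using total_recursive_prim_rec[of 0] by (simp add: numeral_2_eq_2)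

lemma total_recursive_prim_rec_binary:
  "total_recursive 1 f \<Longrightarrow> total_recursive 3 g \<Longrightarrow>
    total_recursive 2 (\<lambda>xs. prim_rec f g (hd xs) (tl xs))"
  using total_recursive_prim_rec[of 1] by (simp add: numeral_2_eq_2 numeral_3_eq_3)

lemma total_recursive_Least:
  assumes "total_recursive (k + 1) f" and "\<And>xs. length xs = k \<Longrightarrow> \<exists>n. f (n # xs) = 0"
  shows "total_recursive k (\<lambda>xs. LEAST n. f (n # xs) = 0)"
proof -
  obtain tf where tf: "\<And>xs. length xs = k + 1 \<Longrightarrow> eval_recf tf xs (f xs)"
    using assms(1) unfolding total_recursive_def by blast
  have "eval_recf (Mn tf) xs (LEAST n. f (n # xs) = 0)" if "length xs = k" for xs
  proof (rule eval_recf.mn)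
    let ?n = "LEAST n. f (n # xs) = 0"
    have "f (?n # xs) = 0" using assms(2)[OF that] by (rule LeastI_ex)
    then show "eval_recf tf (?n # xs) 0" using tf[of "?n # xs"] that by simp
    show "\<forall>m<?n. \<exists>y>0. eval_recf tf (m # xs) y"
    proof (intro allI impI)
      fix m assume "m < ?n"
      then have "0 < f (m # xs)" using not_less_Least by blast
      then show "\<exists>y>0. eval_recf tf (m # xs) y" using tf[of "m # xs"] that by auto
    qed
  qed
  then show ?thesis unfolding total_recursive_def by blast
qed

lemma total_recursive_add:
  assumes "total_recursive k g" "total_recursive k h"
  shows "total_recursive k (\<lambda>xs. g xs + h xs)"
proof -
  have "prim_rec (\<lambda>xs. xs ! 0) (\<lambda>ys. Suc (ys ! 0)) n [x] = n + x" for n x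
    by (induction n) auto
  moreover have "total_recursive 2 (\<lambda>xs. prim_rec (\<lambda>xs. xs ! 0) (\<lambda>ys. Suc (ys ! 0)) (hd xs) (tl xs))"
    by (intro total_recursive_prim_rec_binary total_recursive_Suc total_recursive_proj) auto
  ultimately have "total_recursive 2 (\<lambda>xs. xs ! 0 + xs ! 1)"
    by (elim total_recursive_cong) (auto simp: length_Suc_conv numeral_2_eq_2)
  from total_recursive_comp2[OF this assms] show ?thesis by simp
qed

lemma total_recursive_mult:
  assumes "total_recursive k g" "total_recursive k h"
  shows "total_recursive k (\<lambda>xs. g xs * h xs)"
proof -
  have "prim_rec (\<lambda>_. 0) (\<lambda>ys. ys ! 0 + ys ! 2) n [x] = n * x" for n x
    by (induction n) auto
  moreover have "total_recursive 2 (\<lambda>xs. prim_rec (\<lambda>_. 0) (\<lambda>ys. ys ! 0 + ys ! 2) (hd xs) (tl xs))"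
    by (intro total_recursive_prim_rec_binary total_recursive_add total_recursive_proj
        total_recursive_const) auto
  ultimately have "total_recursive 2 (\<lambda>xs. xs ! 0 * xs ! 1)"
    by (elim total_recursive_cong) (auto simp: length_Suc_conv numeral_2_eq_2)
  from total_recursive_comp2[OF this assms] show ?thesis by simp
qed

lemma total_recursive_diff:
  assumes "total_recursive k g" "total_recursive k h"
  shows "total_recursive k (\<lambda>xs. g xs - h xs)"
proof -
  have "prim_rec (\<lambda>_. 0) (\<lambda>ys. ys ! 1) n [] = n - 1" for n
    by (induction n) auto
  moreover have "total_recursive 1 (\<lambda>xs. prim_rec (\<lambda>_. 0) (\<lambda>ys. ys ! 1) (hd xs) (tl xs))"
    by (intro total_recursive_prim_rec_unary total_recursive_proj total_recursive_const) auto
  ultimately have pred: "total_recursive 1 (\<lambda>xs. xs ! 0 - 1)"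
    by (elim total_recursive_cong) (auto simp: length_Suc_conv)
  have "prim_rec (\<lambda>xs. xs ! 0) (\<lambda>ys. ys ! 0 - 1) n [x] = x - n" for n x
    by (induction n) auto
  moreover have "total_recursive 2 (\<lambda>xs. prim_rec (\<lambda>xs. xs ! 0) (\<lambda>ys. ys ! 0 - 1) (hd xs) (tl xs))"
    using total_recursive_comp1[OF pred total_recursive_proj[of 0 3]]
    by (intro total_recursive_prim_rec_binary total_recursive_proj) auto
  ultimately have "total_recursive 2 (\<lambda>xs. xs ! 1 - xs ! 0)"
    by (elim total_recursive_cong) (auto simp: length_Suc_conv numeral_2_eq_2)
  from total_recursive_comp2[OF this assms(2,1)] show ?thesis by simp
qed

lemma total_recursive_triangle:
  assumes "total_recursive k g"
  shows "total_recursive k (\<lambda>xs. triangle (g xs))"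
proof -
  have "prim_rec (\<lambda>_. 0) (\<lambda>ys. ys ! 0 + Suc (ys ! 1)) n [] = triangle n" for n
    by (induction n) auto
  moreover have "total_recursive 1
      (\<lambda>xs. prim_rec (\<lambda>_. 0) (\<lambda>ys. ys ! 0 + Suc (ys ! 1)) (hd xs) (tl xs))"
    by (intro total_recursive_prim_rec_unary total_recursive_add total_recursive_Suc
        total_recursive_proj total_recursive_const) auto
  ultimately have "total_recursive 1 (\<lambda>xs. triangle (xs ! 0))"
    by (elim total_recursive_cong) (auto simp: length_Suc_conv)
  from total_recursive_comp1[OF this assms] show ?thesis by simp
qed

lemma total_recursive_mod_2:
  assumes "total_recursive k g"
  shows "total_recursive k (\<lambda>xs. g xs mod 2)"
proof -
  have "prim_rec (\<lambda>_. 0) (\<lambda>ys. 1 - ys ! 0) n [] = n mod 2" for n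
    by (induction n) (auto simp: mod_Suc)
  moreover have "total_recursive 1 (\<lambda>xs. prim_rec (\<lambda>_. 0) (\<lambda>ys. 1 - ys ! 0) (hd xs) (tl xs))"
    by (intro total_recursive_prim_rec_unary total_recursive_diff total_recursive_proj
        total_recursive_const) auto
  ultimately have "total_recursive 1 (\<lambda>xs. xs ! 0 mod 2)"
    by (elim total_recursive_cong) (auto simp: length_Suc_conv)
  from total_recursive_comp1[OF this assms] show ?thesis by simp
qed

lemma total_recursive_div_2:
  assumes "total_recursive k g"
  shows "total_recursive k (\<lambda>xs. g xs div 2)"
proof -
  have "prim_rec (\<lambda>_. 0) (\<lambda>ys. ys ! 0 + ys ! 1 mod 2) n [] = n div 2" for n
    by (induction n) (auto simp: div2_Suc_Suc, presburger)
  moreover have "total_recursive 1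
      (\<lambda>xs. prim_rec (\<lambda>_. 0) (\<lambda>ys. ys ! 0 + ys ! 1 mod 2) (hd xs) (tl xs))"
    by (intro total_recursive_prim_rec_unary total_recursive_add total_recursive_mod_2
        total_recursive_proj total_recursive_const) auto
  ultimately have "total_recursive 1 (\<lambda>xs. xs ! 0 div 2)"
    by (elim total_recursive_cong) (auto simp: length_Suc_conv)
  from total_recursive_comp1[OF this assms] show ?thesis by simp
qed

lemma total_recursive_less:
  assumes "total_recursive k g" "total_recursive k h"
  shows "total_recursive k (\<lambda>xs. of_bool (g xs < h xs))"
proof -
  have "total_recursive k (\<lambda>xs. 1 - (1 - (h xs - g xs)))"
    using assms by (intro total_recursive_diff total_recursive_const)
  then show ?thesis by (rule total_recursive_cong) auto
qed

lemma total_recursive_even: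
  assumes "total_recursive k g"
  shows "total_recursive k (\<lambda>xs. of_bool (even (g xs)))"
proof -
  have "total_recursive k (\<lambda>xs. 1 - g xs mod 2)"
    using assms by (intro total_recursive_diff total_recursive_mod_2 total_recursive_const)
  then show ?thesis by (rule total_recursive_cong) (auto simp: even_iff_mod_2_eq_zero)
qed

lemma total_recursive_not:
  assumes "total_recursive k (\<lambda>xs. of_bool (P xs))"
  shows "total_recursive k (\<lambda>xs. of_bool (\<not> P xs))"
proof -
  have "total_recursive k (\<lambda>xs. 1 - of_bool (P xs))"
    using assms by (intro total_recursive_diff total_recursive_const)
  then show ?thesis by (rule total_recursive_cong) auto
qed

lemma total_recursive_conj:
  assumes "total_recursive k (\<lambda>xs. of_bool (P xs))" "total_recursive k (\<lambda>xs. of_bool (Q xs))"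
  shows "total_recursive k (\<lambda>xs. of_bool (P xs \<and> Q xs))"
  using total_recursive_mult[OF assms] by (rule total_recursive_cong) simp

lemma total_recursive_disj:
  assumes "total_recursive k (\<lambda>xs. of_bool (P xs))" "total_recursive k (\<lambda>xs. of_bool (Q xs))"
  shows "total_recursive k (\<lambda>xs. of_bool (P xs \<or> Q xs))"
  using total_recursive_not[OF total_recursive_conj[OF assms[THEN total_recursive_not]]] by simp

definition triangle_root :: "nat \<Rightarrow> nat" where
  "triangle_root m = (LEAST s. m < triangle (Suc s))"

lemma triangle_root_bounds: "triangle (triangle_root m) \<le> m" "m < triangle (Suc (triangle_root m))"
proof -
  have ex: "\<exists>s. m < triangle (Suc s)" by (rule exI[of _ m]) simp
  show "m < triangle (Suc (triangle_root m))"
    unfolding triangle_root_def by (rule LeastI_ex[OF ex])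
  show "triangle (triangle_root m) \<le> m"
  proof (cases "triangle_root m")
    case (Suc s)
    then have "\<not> m < triangle (Suc s)"
      unfolding triangle_root_def by (intro not_less_Least) simp
    then show ?thesis using Suc by simp
  qed simp
qed

lemma prod_decode_triangle_root:
  "prod_decode m = (m - triangle (triangle_root m), triangle_root m - (m - triangle (triangle_root m)))"
proof -
  let ?s = "triangle_root m"
  have "triangle ?s \<le> m" "m < triangle ?s + Suc ?s" using triangle_root_bounds[of m] by auto
  then have "prod_encode (m - triangle ?s, ?s - (m - triangle ?s)) = m"
    unfolding prod_encode_def by auto
  then show ?thesis by (metis prod_encode_inverse)
qed

lemma total_recursive_triangle_root:
  assumes "total_recursive k g"
  shows "total_recursive k (\<lambda>xs. triangle_root (g xs))"
proof -
  define F where "F ys = 1 - (triangle (Suc (ys ! 0)) - ys ! 1)" for ys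
  \<comment> \<open>\<open>F [n, m]\<close> vanishes iff \<open>m < triangle (Suc n)\<close>\<close>
  have "total_recursive (1 + 1) F" unfolding F_def
    by (intro total_recursive_diff total_recursive_const total_recursive_triangle total_recursive_Suc
        total_recursive_proj) auto
  moreover have "\<exists>n. F (n # xs) = 0" for xs
    by (rule exI[of _ "xs ! 0"]) (simp add: F_def)
  ultimately have "total_recursive 1 (\<lambda>xs. LEAST n. F (n # xs) = 0)"
    by (rule total_recursive_Least)
  then have "total_recursive 1 (\<lambda>xs. triangle_root (xs ! 0))"
    by (rule total_recursive_cong) (simp add: triangle_root_def Suc_le_eq F_def)
  from total_recursive_comp1[OF this assms] show ?thesis by simp
qed

lemma total_recursive_prod_decode:
  assumes "total_recursive k g"
  shows "total_recursive k (\<lambda>xs. fst (prod_decode (g xs)))"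
    and "total_recursive k (\<lambda>xs. snd (prod_decode (g xs)))"
  unfolding prod_decode_triangle_root using assms
  by (simp_all add: total_recursive_diff total_recursive_triangle total_recursive_triangle_root)

lemma total_recursive_prod_encode:
  assumes "total_recursive k g" "total_recursive k h"
  shows "total_recursive k (\<lambda>xs. prod_encode (g xs, h xs))"
  unfolding prod_encode_def using assms
  by (simp add: total_recursive_add total_recursive_triangle)

section \<open>Recursive selections by rational thresholds\<close>

lemma of_rat_rat_decode_even:
  assumes "even (fst (prod_decode m))"
  shows "real_of_rat (rat_decode m) = real (fst (prod_decode m) div 2) / real (Suc (snd (prod_decode m)))"
  using assms unfolding rat_decode_def int_decode_def sum_decode_def
  by (simp add: case_prod_beta of_rat_divide del: of_nat_Suc)

lemma of_rat_rat_decode_odd_neg: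
  assumes "odd (fst (prod_decode m))"
  shows "real_of_rat (rat_decode m) < 0"
  using assms unfolding rat_decode_def int_decode_def sum_decode_def
  by (simp add: case_prod_beta of_rat_divide divide_neg_pos del: of_nat_Suc)

lemma rat_decode_less_iff:
  assumes "0 < q"
  shows "real_of_rat (rat_decode m) < real p / real q \<longleftrightarrow>
    odd (fst (prod_decode m)) \<or> fst (prod_decode m) div 2 * q < p * Suc (snd (prod_decode m))"
proof (cases "even (fst (prod_decode m))")
  case True
  have "real (fst (prod_decode m) div 2) / real (Suc (snd (prod_decode m))) < real p / real q \<longleftrightarrow>
      real (fst (prod_decode m) div 2 * q) < real (p * Suc (snd (prod_decode m)))"
    using assms by (simp add: field_simps)
  also have "\<dots> \<longleftrightarrow> fst (prod_decode m) div 2 * q < p * Suc (snd (prod_decode m))"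
    by (rule of_nat_less_iff)
  finally show ?thesis using True by (simp add: of_rat_rat_decode_even del: of_nat_Suc)
next
  case False
  have "real_of_rat (rat_decode m) < 0" "0 \<le> real p / real q"
    using of_rat_rat_decode_odd_neg[OF False] by simp_all
  with False show ?thesis by linarith
qed

lemma less_rat_decode_iff:
  assumes "0 < q"
  shows "real p / real q < real_of_rat (rat_decode m) \<longleftrightarrow>
    even (fst (prod_decode m)) \<and> p * Suc (snd (prod_decode m)) < fst (prod_decode m) div 2 * q"
proof (cases "even (fst (prod_decode m))")
  case True
  have "real p / real q < real (fst (prod_decode m) div 2) / real (Suc (snd (prod_decode m))) \<longleftrightarrow>
      real (p * Suc (snd (prod_decode m))) < real (fst (prod_decode m) div 2 * q)"
    using assms by (simp add: field_simps)
  also have "\<dots> \<longleftrightarrow> p * Suc (snd (prod_decode m)) < fst (prod_decode m) div 2 * q"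
    by (rule of_nat_less_iff)
  finally show ?thesis using True by (simp add: of_rat_rat_decode_even del: of_nat_Suc)
next
  case False
  have "real_of_rat (rat_decode m) < 0" "0 \<le> real p / real q"
    using of_rat_rat_decode_odd_neg[OF False] by simp_all
  with False show ?thesis by linarith
qed

lemma recursive_fun_iff_total_recursive: "recursive_fun f \<longleftrightarrow> total_recursive 1 (\<lambda>xs. f (hd xs))"
  unfolding recursive_fun_def total_recursive_def
  by (metis One_nat_def length_Suc_conv length_0_conv list.sel(1) list.size(3,4))

lemma recursive_selection_sit_encode:
  assumes "total_recursive 1 (\<lambda>xs. of_bool (P (hd xs)))"
  shows "recursive_selection (\<lambda>s. P (sit_encode s))"
  using assms unfolding recursive_selection_def recursive_fun_iff_total_recursive by auto

text \<open>A nonnegative threshold is a quotient \<open>p / q\<close> of naturals, so comparing it with a decoded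
  rational reduces to the parity of the numerator code and one cross-multiplication.\<close>

lemma recursive_selection_rat_threshold:
  assumes "recursive_rat_fun ql" "r \<in> \<rat>" "0 \<le> r"
  shows "recursive_selection (\<lambda>s. real_of_rat (ql s N) < r)"
    and "recursive_selection (\<lambda>s. r < real_of_rat (ql s N))"
proof -
  obtain g where g: "recursive_fun g"
    and ql: "\<And>s n. ql s n = rat_decode (g (prod_encode (sit_encode s, n)))"
    using assms(1) unfolding recursive_rat_fun_def by blast
  obtain p q :: nat where q: "0 < q" and r: "r = real p / real q"
    using Rats_abs_nat_div_natE[OF assms(2)] assms(3) by (metis abs_of_nonneg gr0I)
  define G where "G n = g (prod_encode (n, N))" for n
  have ql_G: "ql s N = rat_decode (G (sit_encode s))" for s
    by (simp add: ql G_def)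
  have "total_recursive 1 (\<lambda>xs. prod_encode (xs ! 0, N))"
    by (intro total_recursive_prod_encode total_recursive_proj total_recursive_const) simp
  from total_recursive_comp1[OF g[unfolded recursive_fun_iff_total_recursive] this]
  have G: "total_recursive 1 (\<lambda>xs. G (hd xs))"
    by (rule total_recursive_cong) (auto simp: G_def length_Suc_conv)
  have "total_recursive 1 (\<lambda>xs. of_bool (real_of_rat (rat_decode (G (hd xs))) < r))"
    unfolding r rat_decode_less_iff[OF q]
    by (intro total_recursive_disj total_recursive_not total_recursive_even total_recursive_less
        total_recursive_mult total_recursive_div_2 total_recursive_Suc total_recursive_const
        total_recursive_prod_decode G)
  then show "recursive_selection (\<lambda>s. real_of_rat (ql s N) < r)"
    unfolding ql_G by (rule recursive_selection_sit_encode)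
  have "total_recursive 1 (\<lambda>xs. of_bool (r < real_of_rat (rat_decode (G (hd xs)))))"
    unfolding r less_rat_decode_iff[OF q]
    by (intro total_recursive_conj total_recursive_even total_recursive_less
        total_recursive_mult total_recursive_div_2 total_recursive_Suc total_recursive_const
        total_recursive_prod_decode G)
  then show "recursive_selection (\<lambda>s. r < real_of_rat (ql s N))"
    unfolding ql_G by (rule recursive_selection_sit_encode)
qed

section \<open>Averages along a selection\<close>

definition selection_count :: "(nat \<Rightarrow> bool) \<Rightarrow> nat \<Rightarrow> real" where
  "selection_count S n = (\<Sum>k<n. of_bool (S k))"

definition selection_average :: "(nat \<Rightarrow> bool) \<Rightarrow> (nat \<Rightarrow> real) \<Rightarrow> nat \<Rightarrow> real" where
  "selection_average S v n = (\<Sum>k<n. of_bool (S k) * v k) / selection_count S n"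

lemma selection_average_diff:
  "selection_average S (\<lambda>k. v k - w k) n = selection_average S v n - selection_average S w n"
  unfolding selection_average_def by (simp add: right_diff_distrib sum_subtractf diff_divide_distrib)

lemma selection_average_uminus:
  "selection_average S (\<lambda>k. - v k) n = - selection_average S v n"
  unfolding selection_average_def by (simp add: sum_negf)

lemma selection_average_const:
  assumes "0 < selection_count S n"
  shows "selection_average S (\<lambda>_. c) n = c"
proof -
  have sum: "(\<Sum>k<n. of_bool (S k) * c) = selection_count S n * c"
    unfolding selection_count_def by (rule sum_distrib_right[symmetric])
  show ?thesis using assms unfolding selection_average_def sum by simp
qed

lemma selection_average_le:
  assumes "\<And>k. S k \<Longrightarrow> v k \<le> u" "0 < selection_count S n"
  shows "selection_average S v n \<le> u"
proof -
  have "(\<Sum>k<n. of_bool (S k) * v k) \<le> (\<Sum>k<n. of_bool (S k) * u)"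
    by (intro sum_mono) (simp add: assms(1))
  also have "\<dots> = selection_count S n * u"
    unfolding selection_count_def by (rule sum_distrib_right[symmetric])
  finally show ?thesis
    using assms(2) by (simp add: selection_average_def divide_le_eq mult.commute)
qed

lemma filterlim_selection_count:
  assumes "frequently S sequentially"
  shows "filterlim (selection_count S) at_top sequentially"
proof -
  have mono: "mono (selection_count S)"
    unfolding selection_count_def by (intro monoI sum_mono2) auto
  have "\<exists>N. real m \<le> selection_count S N" for m
  proof (induction m)
    case (Suc m)
    then obtain N where N: "real m \<le> selection_count S N" by blast
    obtain k where "N \<le> k" "S k" using assms unfolding frequently_sequentially by blast
    then have "real (Suc m) \<le> selection_count S (Suc k)"
      using N monoD[OF mono \<open>N \<le> k\<close>] by (simp add: selection_count_def)
    then show ?case by blast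
  qed (auto simp: selection_count_def)
  then have "\<forall>\<^sub>F n in sequentially. Z \<le> selection_count S n" for Z
    using real_arch_simple[of Z] mono
    by (metis eventually_sequentially monoD order_trans)
  then show ?thesis unfolding filterlim_at_top by blast
qed

lemma calibrated_selection_le:
  assumes count: "filterlim (selection_count S) at_top sequentially"
    and bound: "\<And>k. S k \<Longrightarrow> f k \<le> u"
    and calibrated: "Limsup sequentially (\<lambda>n. ereal (selection_average S (\<lambda>k. w k - f k) n)) \<le> 0"
    and frequency: "0 \<le> Liminf sequentially (\<lambda>n. ereal (selection_average S (\<lambda>k. w k - a) n))"
  shows "a \<le> u"
proof (rule field_le_epsilon)
  fix d :: real assume "0 < d"
  have "\<forall>\<^sub>F n in sequentially. ereal (selection_average S (\<lambda>k. w k - f k) n) < ereal (d / 2)"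
    using \<open>0 < d\<close> by (intro Limsup_lessD le_less_trans[OF calibrated]) simp
  moreover have "\<forall>\<^sub>F n in sequentially. ereal (- d / 2) < ereal (selection_average S (\<lambda>k. w k - a) n)"
    using \<open>0 < d\<close> by (intro less_LiminfD less_le_trans[OF _ frequency]) simp
  moreover have "\<forall>\<^sub>F n in sequentially. 1 \<le> selection_count S n"
    using count unfolding filterlim_at_top by blast
  ultimately have "\<forall>\<^sub>F n in sequentially.
      selection_average S (\<lambda>k. w k - f k) n < d / 2 \<and>
      - d / 2 < selection_average S (\<lambda>k. w k - a) n \<and> 0 < selection_count S n"
    by eventually_elim auto
  then obtain n where
    calibrated_n: "selection_average S (\<lambda>k. w k - f k) n < d / 2" and
    frequency_n: "- d / 2 < selection_average S (\<lambda>k. w k - a) n" and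
    selected: "0 < selection_count S n"
    using eventually_happens'[OF sequentially_bot] by blast
  have "a - d / 2 < selection_average S w n"
    using frequency_n selection_average_const[OF selected] by (simp add: selection_average_diff)
  also have "\<dots> < selection_average S f n + d / 2"
    using calibrated_n by (simp add: selection_average_diff)
  also have "\<dots> \<le> u + d / 2"
    using selection_average_le[OF bound selected] by simp
  finally show "a \<le> u + d" by simp
qed

lemma calibrated_selection_ge:
  assumes count: "filterlim (selection_count S) at_top sequentially"
    and bound: "\<And>k. S k \<Longrightarrow> u \<le> f k"
    and calibrated: "0 \<le> Liminf sequentially (\<lambda>n. ereal (selection_average S (\<lambda>k. w k - f k) n))"
    and frequency: "Limsup sequentially (\<lambda>n. ereal (selection_average S (\<lambda>k. w k - b) n)) \<le> 0"
  shows "u \<le> b"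
proof -
  have negate: "ereal (selection_average S (\<lambda>k. - w k - - g k) n) =
      - ereal (selection_average S (\<lambda>k. w k - g k) n)" for g n
    using selection_average_uminus[of S "\<lambda>k. w k - g k"] by simp
  have "- b \<le> - u"
  proof (rule calibrated_selection_le[OF count, where f = "\<lambda>k. - f k" and w = "\<lambda>k. - w k"])
    show "Limsup sequentially (\<lambda>n. ereal (selection_average S (\<lambda>k. - w k - - f k) n)) \<le> 0"
      using calibrated unfolding negate ereal_Limsup_uminus by simp
    show "0 \<le> Liminf sequentially (\<lambda>n. ereal (selection_average S (\<lambda>k. - w k - - b) n))"
      using frequency unfolding negate[of "\<lambda>_. b"] ereal_Liminf_uminus by simp
  qed (use bound in simp)
  then show ?thesis by simp
qed

section \<open>Limit points of a computable precise forecast\<close>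

lemma CH_randomD:
  assumes "CH_random \<phi> \<omega>" "recursive_selection S"
    and "filterlim (selection_count (\<lambda>k. S (prefix \<omega> k))) at_top sequentially"
  shows "0 \<le> Liminf sequentially (\<lambda>n. ereal (selection_average (\<lambda>k. S (prefix \<omega> k))
      (\<lambda>k. of_bool (\<omega> k) - lower \<phi> (prefix \<omega> k)) n))"
    and "Limsup sequentially (\<lambda>n. ereal (selection_average (\<lambda>k. S (prefix \<omega> k))
      (\<lambda>k. of_bool (\<omega> k) - upper \<phi> (prefix \<omega> k)) n)) \<le> 0"
  using assms unfolding CH_random_def selection_average_def selection_count_def[abs_def] by auto

lemma lower_upper_const_interval:
  assumes "a \<le> b"
  shows "lower (\<lambda>_. {a..b}) s = a" and "upper (\<lambda>_. {a..b}) s = b"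
  using assms by (simp_all add: lower_def upper_def)

lemma forecasting_system_lower_nonneg:
  assumes "forecasting_system \<phi>"
  shows "0 \<le> lower \<phi> s"
proof -
  obtain a b where "0 \<le> a" "a \<le> b" "\<phi> s = {a..b}"
    using assms unfolding forecasting_system_def intervals_def by blast
  then show ?thesis by (simp add: lower_def)
qed

lemma computable_fs_lower_approx:
  assumes "computable_fs \<phi>" "0 < e"
  obtains ql N where "recursive_rat_fun ql" "\<And>s. \<bar>lower \<phi> s - real_of_rat (ql s N)\<bar> < e"
proof -
  obtain ql where ql: "recursive_rat_fun ql"
    and approx: "\<And>s n. \<bar>lower \<phi> s - real_of_rat (ql s n)\<bar> < 1 / 2 ^ n"
    using assms(1) unfolding computable_fs_def by blast
  obtain N where N: "1 / 2 ^ N < e"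
    using real_arch_pow_inv[OF assms(2), of "1 / 2"] by (auto simp: power_one_over)
  have "\<bar>lower \<phi> s - real_of_rat (ql s N)\<bar> < e" for s
    using approx[of s N] N by linarith
  with ql show ?thesis by (rule that)
qed

lemma lower_le_of_frequently_below:
  assumes "precise \<phi>" "computable_fs \<phi>" "CH_random \<phi> \<omega>"
    and "CH_random (\<lambda>_. {a..b}) \<omega>" "a \<le> b" "0 \<le> c"
    and below: "frequently (\<lambda>k. lower \<phi> (prefix \<omega> k) < c) sequentially"
  shows "a \<le> c"
proof (rule ccontr)
  let ?f = "\<lambda>k. lower \<phi> (prefix \<omega> k)"
  assume "\<not> a \<le> c"
  define e where "e = (a - c) / 3"
  have "0 < e" "c + e < a - e" using \<open>\<not> a \<le> c\<close> by (auto simp: e_def field_simps)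
  obtain ql N where ql: "recursive_rat_fun ql"
    and approx: "\<And>s. \<bar>lower \<phi> s - real_of_rat (ql s N)\<bar> < e"
    using computable_fs_lower_approx[OF assms(2) \<open>0 < e\<close>] by blast
  obtain r where "r \<in> \<rat>" and r: "c + e < r" "r < a - e"
    using Rats_dense_in_real[OF \<open>c + e < a - e\<close>] by blast
  define S where "S s \<longleftrightarrow> real_of_rat (ql s N) < r" for s
  have "0 \<le> r" using r \<open>0 \<le> c\<close> \<open>0 < e\<close> by linarith
  then have sel: "recursive_selection S"
    unfolding S_def by (rule recursive_selection_rat_threshold(1)[OF ql \<open>r \<in> \<rat>\<close>])
  from below have "frequently (\<lambda>k. S (prefix \<omega> k)) sequentially"
  proof (rule frequently_elim1)
    fix k assume "?f k < c"
    then show "S (prefix \<omega> k)"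
      using approx[of "prefix \<omega> k", unfolded abs_less_iff] r unfolding S_def by linarith
  qed
  then have count: "filterlim (selection_count (\<lambda>k. S (prefix \<omega> k))) at_top sequentially"
    by (rule filterlim_selection_count)
  have "a \<le> r + e"
  proof (rule calibrated_selection_le[OF count])
    show "?f k \<le> r + e" if "S (prefix \<omega> k)" for k
      using that approx[of "prefix \<omega> k", unfolded abs_less_iff] unfolding S_def by linarith
    show "Limsup sequentially (\<lambda>n. ereal (selection_average (\<lambda>k. S (prefix \<omega> k))
        (\<lambda>k. of_bool (\<omega> k) - ?f k) n)) \<le> 0"
      using CH_randomD(2)[OF assms(3) sel count] assms(1) by (simp add: precise_def)
    show "0 \<le> Liminf sequentially (\<lambda>n. ereal (selection_average (\<lambda>k. S (prefix \<omega> k))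
        (\<lambda>k. of_bool (\<omega> k) - a) n))"
      using CH_randomD(1)[OF assms(4) sel count] by (simp add: lower_upper_const_interval assms(5))
  qed
  with r show False by simp
qed

lemma le_upper_of_frequently_above:
  assumes "computable_fs \<phi>" "CH_random \<phi> \<omega>"
    and "CH_random (\<lambda>_. {a..b}) \<omega>" "a \<le> b" "0 \<le> b"
    and above: "frequently (\<lambda>k. c < lower \<phi> (prefix \<omega> k)) sequentially"
  shows "c \<le> b"
proof (rule ccontr)
  let ?f = "\<lambda>k. lower \<phi> (prefix \<omega> k)"
  assume "\<not> c \<le> b"
  define e where "e = (c - b) / 3"
  have "0 < e" "b + e < c - e" using \<open>\<not> c \<le> b\<close> by (auto simp: e_def field_simps)
  obtain ql N where ql: "recursive_rat_fun ql"
    and approx: "\<And>s. \<bar>lower \<phi> s - real_of_rat (ql s N)\<bar> < e"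
    using computable_fs_lower_approx[OF assms(1) \<open>0 < e\<close>] by blast
  obtain r where "r \<in> \<rat>" and r: "b + e < r" "r < c - e"
    using Rats_dense_in_real[OF \<open>b + e < c - e\<close>] by blast
  define S where "S s \<longleftrightarrow> r < real_of_rat (ql s N)" for s
  have "0 \<le> r" using r \<open>0 \<le> b\<close> \<open>0 < e\<close> by linarith
  then have sel: "recursive_selection S"
    unfolding S_def by (rule recursive_selection_rat_threshold(2)[OF ql \<open>r \<in> \<rat>\<close>])
  from above have "frequently (\<lambda>k. S (prefix \<omega> k)) sequentially"
  proof (rule frequently_elim1)
    fix k assume "c < ?f k"
    then show "S (prefix \<omega> k)"
      using approx[of "prefix \<omega> k", unfolded abs_less_iff] r unfolding S_def by linarith
  qed
  then have count: "filterlim (selection_count (\<lambda>k. S (prefix \<omega> k))) at_top sequentially"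
    by (rule filterlim_selection_count)
  have "r - e \<le> b"
  proof (rule calibrated_selection_ge[OF count])
    show "r - e \<le> ?f k" if "S (prefix \<omega> k)" for k
      using that approx[of "prefix \<omega> k", unfolded abs_less_iff] unfolding S_def by linarith
    show "0 \<le> Liminf sequentially (\<lambda>n. ereal (selection_average (\<lambda>k. S (prefix \<omega> k))
        (\<lambda>k. of_bool (\<omega> k) - ?f k) n))"
      by (rule CH_randomD(1)[OF assms(2) sel count])
    show "Limsup sequentially (\<lambda>n. ereal (selection_average (\<lambda>k. S (prefix \<omega> k))
        (\<lambda>k. of_bool (\<omega> k) - b) n)) \<le> 0"
      using CH_randomD(2)[OF assms(3) sel count] by (simp add: lower_upper_const_interval assms(4))
  qed
  with r show False by simp
qed

lemma lower_le_Liminf_of_CH_random: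
  assumes "forecasting_system \<phi>" "precise \<phi>" "computable_fs \<phi>" "CH_random \<phi> \<omega>"
    and "CH_random (\<lambda>_. {a..b}) \<omega>" "a \<le> b"
  shows "ereal a \<le> Liminf sequentially (\<lambda>n. ereal (lower \<phi> (prefix \<omega> n)))"
proof (rule ccontr)
  let ?f = "\<lambda>k. lower \<phi> (prefix \<omega> k)"
  assume "\<not> ?thesis"
  then have "Liminf sequentially (\<lambda>k. ereal (?f k)) < ereal a" by (simp add: not_le)
  then obtain c where c: "Liminf sequentially (\<lambda>k. ereal (?f k)) < ereal c" "ereal c < ereal a"
    using ereal_dense2 by blast
  have "0 \<le> Liminf sequentially (\<lambda>k. ereal (?f k))"
    using forecasting_system_lower_nonneg[OF assms(1)]
    by (intro Liminf_bounded always_eventually) simp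
  from le_less_trans[OF this c(1)] have "0 \<le> c" by simp
  have "frequently (\<lambda>k. ?f k < c) sequentially"
  proof (rule ccontr)
    assume "\<not> ?thesis"
    then have "ereal c \<le> Liminf sequentially (\<lambda>k. ereal (?f k))"
      by (intro Liminf_bounded) (simp add: not_frequently not_less)
    with c(1) show False by simp
  qed
  then have "a \<le> c" by (rule lower_le_of_frequently_below[OF assms(2-6) \<open>0 \<le> c\<close>])
  with c(2) show False by simp
qed

lemma Limsup_le_upper_of_CH_random:
  assumes "computable_fs \<phi>" "CH_random \<phi> \<omega>"
    and "CH_random (\<lambda>_. {a..b}) \<omega>" "a \<le> b" "0 \<le> b"
  shows "Limsup sequentially (\<lambda>n. ereal (lower \<phi> (prefix \<omega> n))) \<le> ereal b"
proof (rule ccontr)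
  let ?f = "\<lambda>k. lower \<phi> (prefix \<omega> k)"
  assume "\<not> ?thesis"
  then have "ereal b < Limsup sequentially (\<lambda>k. ereal (?f k))" by (simp add: not_le)
  then obtain c where c: "ereal b < ereal c" "ereal c < Limsup sequentially (\<lambda>k. ereal (?f k))"
    using ereal_dense2 by blast
  have "frequently (\<lambda>k. c < ?f k) sequentially"
  proof (rule ccontr)
    assume "\<not> ?thesis"
    then have "Limsup sequentially (\<lambda>k. ereal (?f k)) \<le> ereal c"
      by (intro Limsup_bounded) (simp add: not_frequently not_less)
    with c(2) show False by simp
  qed
  then have "c \<le> b" by (rule le_upper_of_frequently_above[OF assms])
  with c(1) show False by simp
qed

theorem proposition16:
  fixes \<phi> :: "bool list \<Rightarrow> real set" and \<omega> :: "nat \<Rightarrow> bool"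
  assumes "forecasting_system \<phi>" and "precise \<phi>" and "computable_fs \<phi>"
    and "CH_random \<phi> \<omega>"
  shows "{x. Liminf sequentially (\<lambda>n. ereal (lower \<phi> (prefix \<omega> n))) \<le> ereal x \<and>
             ereal x \<le> Limsup sequentially (\<lambda>n. ereal (lower \<phi> (prefix \<omega> n)))}
         \<subseteq> I_CH \<omega>"
proof (intro subsetI, unfold I_CH_def, rule InterI)
  fix x I
  assume "x \<in> {x. Liminf sequentially (\<lambda>n. ereal (lower \<phi> (prefix \<omega> n))) \<le> ereal x \<and>
      ereal x \<le> Limsup sequentially (\<lambda>n. ereal (lower \<phi> (prefix \<omega> n)))}"
  then have x: "Liminf sequentially (\<lambda>n. ereal (lower \<phi> (prefix \<omega> n))) \<le> ereal x"
    "ereal x \<le> Limsup sequentially (\<lambda>n. ereal (lower \<phi> (prefix \<omega> n)))" by simp_all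
  assume "I \<in> {I \<in> intervals. CH_random (\<lambda>_. I) \<omega>}"
  then obtain a b where I: "I = {a..b}" "0 \<le> a" "a \<le> b" and CH_I: "CH_random (\<lambda>_. {a..b}) \<omega>"
    unfolding intervals_def by auto
  have "0 \<le> b" using I by simp
  have "ereal a \<le> ereal x"
    using lower_le_Liminf_of_CH_random[OF assms CH_I \<open>a \<le> b\<close>] x(1) by (rule order_trans)
  moreover have "ereal x \<le> ereal b"
    using x(2) Limsup_le_upper_of_CH_random[OF assms(3,4) CH_I \<open>a \<le> b\<close> \<open>0 \<le> b\<close>]
    by (rule order_trans)
  ultimately show "x \<in> I" using I by simp
qed

end
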